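(* Let $\Gamma$ be a group of compactly supported homeomorphisms of $\mathbb{R}$ that contains $F'$, with $F$ and $F'$ as in the context. Then the commutator subgroup $\Gamma'$ is simple.
   Context: $F$ denotes the group of homeomorphisms of $\mathbb{R}$ generated by the following two maps: - $a(t)=t+1$; - $b$, where $b(t)=t$ for $t\le 0$, $b(t)=t/(1-t)$ for $0\le t\le 1/2$, $b(t)=(3t-1)/t$ for $1/2\le t\le 1$, and $b(t)=t+1$ for $t\ge 1$. This $F$ is a copy of Thompson's group $F$ acting on the real line, and $F'$ is its commutator subgroup. *)

theory Defs
  imports "HOL-Analysis.Analysis" "HOL-Algebra.Algebra"
begin

definition Homeo :: "(real \<Rightarrow> real) monoid" where
  "Homeo = \<lparr>carrier = {f. \<exists>g. homeomorphism UNIV UNIV f g}, mult = (\<circ>), one = id\<rparr>"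

definition compactly_supported :: "(real \<Rightarrow> real) \<Rightarrow> bool" where
  "compactly_supported f \<longleftrightarrow> compact (closure {x. f x \<noteq> x})"

definition gen_a :: "real \<Rightarrow> real" where
  "gen_a t = t + 1"

definition gen_b :: "real \<Rightarrow> real" where
  "gen_b t = (if t \<le> 0 then t
              else if t \<le> 1/2 then t / (1 - t)
              else if t \<le> 1 then (3 * t - 1) / t
              else t + 1)"

definition ThompsonF :: "(real \<Rightarrow> real) set" where
  "ThompsonF = generate Homeo {gen_a, gen_b}"

definition ThompsonF' :: "(real \<Rightarrow> real) set" where
  "ThompsonF' = derived Homeo ThompsonF"

text \<open>Simplicity of a (possibly infinite) group: nontrivial, and its only normal
  subgroups are the trivial one and the whole group.  (The library's simple_group
  requires finite order, so it is unsuitable for infinite groups.)\<close>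
definition simple :: "('a, 'b) monoid_scheme \<Rightarrow> bool" where
  "simple G \<longleftrightarrow> group G \<and> carrier G \<noteq> {\<one>\<^bsub>G\<^esub>} \<and>
     (\<forall>N. N \<lhd> G \<longrightarrow> N = {\<one>\<^bsub>G\<^esub>} \<or> N = carrier G)"

end

theory Submission
  imports Defs
begin

text \<open>F' is locally as rich as F: an element of F fixing a half-line agrees on any compact
  interval with its commutator with a far translation, and the generators of F are of this
  kind up to such agreement. Since the orbit of 0 under F is dense and powers of b^{-1}
  contract a compact interval towards 0, elements of F', hence of \<Gamma>, push any compact
  interval into any open interval; correcting by such pushed conjugates, every element of
  \<Gamma> agrees on any compact interval with an element of \<Gamma>'.

  Now let n \<noteq> 1 lie in a normal subgroup N of \<Gamma>' and choose an open interval U with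
  n(U) \<inter> U = {}. For u, v \<in> \<Gamma>' supported in U, the element n u^{-1} n^{-1} is supported in
  n(U), so [u, v] = [[u, n], v] \<in> N. A commutator [x, y] of \<Gamma> equals [x', y'] for
  x', y' \<in> \<Gamma>' with compact support (multiply x, y by far conjugates of their inverses), and
  conjugating by an element of \<Gamma>' pushes both supports into U. Hence \<Gamma>' \<subseteq> N.\<close>

lemma Homeo_carrier_iff: "f \<in> carrier Homeo \<longleftrightarrow> (\<exists>g. homeomorphism UNIV UNIV f g)"
  by (simp add: Homeo_def)

lemma Homeo_mult [simp]: "f \<otimes>\<^bsub>Homeo\<^esub> g = f \<circ> g"
  by (simp add: Homeo_def)

lemma Homeo_one [simp]: "\<one>\<^bsub>Homeo\<^esub> = id"
  by (simp add: Homeo_def)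

lemma group_Homeo: "group Homeo"
proof (rule groupI)
  fix x y assume "x \<in> carrier Homeo" "y \<in> carrier Homeo"
  then show "x \<otimes>\<^bsub>Homeo\<^esub> y \<in> carrier Homeo"
    unfolding Homeo_carrier_iff Homeo_mult using homeomorphism_compose by blast
next
  show "\<one>\<^bsub>Homeo\<^esub> \<in> carrier Homeo"
    unfolding Homeo_carrier_iff Homeo_one using homeomorphism_ident[of UNIV] by (auto simp: id_def)
next
  fix x assume "x \<in> carrier Homeo"
  then obtain g where g: "homeomorphism UNIV UNIV x g" unfolding Homeo_carrier_iff by blast
  then have "g \<in> carrier Homeo" unfolding Homeo_carrier_iff using homeomorphism_symD by blast
  moreover have "g \<circ> x = id" using g unfolding homeomorphism_def by auto
  ultimately show "\<exists>y\<in>carrier Homeo. y \<otimes>\<^bsub>Homeo\<^esub> x = \<one>\<^bsub>Homeo\<^esub>" by auto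
qed (simp_all add: o_assoc)

interpretation Homeo: group Homeo
  by (rule group_Homeo)

abbreviation hinv :: "(real \<Rightarrow> real) \<Rightarrow> real \<Rightarrow> real" where
  "hinv f \<equiv> inv\<^bsub>Homeo\<^esub> f"

lemmas Homeo_comp_closed = Homeo.m_closed[unfolded Homeo_mult]

lemma hinv_apply [simp]: "f \<in> carrier Homeo \<Longrightarrow> hinv f (f t) = t"
  using Homeo.l_inv[of f] by (metis Homeo_mult Homeo_one comp_apply id_apply)

lemma apply_hinv [simp]: "f \<in> carrier Homeo \<Longrightarrow> f (hinv f t) = t"
  using Homeo.r_inv[of f] by (metis Homeo_mult Homeo_one comp_apply id_apply)

lemma hinv_eq_iff: "f \<in> carrier Homeo \<Longrightarrow> hinv f t = s \<longleftrightarrow> f s = t"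
  by (metis hinv_apply apply_hinv)

lemma hinv_comp: "f \<in> carrier Homeo \<Longrightarrow> g \<in> carrier Homeo \<Longrightarrow> hinv (f \<circ> g) = hinv g \<circ> hinv f"
  using Homeo.inv_mult_group[of f g] by simp

lemma continuous_on_Homeo: "f \<in> carrier Homeo \<Longrightarrow> continuous_on UNIV f"
  unfolding Homeo_carrier_iff homeomorphism_def by auto

lemma subgroup_conj_closed:
  "subgroup H Homeo \<Longrightarrow> h \<in> H \<Longrightarrow> x \<in> H \<Longrightarrow> h \<circ> x \<circ> hinv h \<in> H"
  by (metis Homeo_mult subgroup.m_closed subgroup.m_inv_closed)

lemma bounded_image_interval:
  assumes "f \<in> carrier Homeo"
  obtains B where "f ` {p..q} \<subseteq> {-B..B}"
proof -
  have "compact (f ` {p..q})"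
    using compact_continuous_image continuous_on_subset[OF continuous_on_Homeo[OF assms]] by blast
  then obtain B where "\<forall>s\<in>f ` {p..q}. \<bar>s\<bar> \<le> B" using compact_imp_bounded bounded_real by meson
  then show thesis using that by (force simp: abs_le_iff)
qed

abbreviation comm :: "(real \<Rightarrow> real) \<Rightarrow> (real \<Rightarrow> real) \<Rightarrow> real \<Rightarrow> real" where
  "comm f g \<equiv> f \<circ> g \<circ> hinv f \<circ> hinv g"

lemma comm_in_derived: "x \<in> H \<Longrightarrow> y \<in> H \<Longrightarrow> comm x y \<in> derived Homeo H"
  unfolding derived_def by (rule generate.incl) force

lemma conj_comm:
  assumes "h \<in> carrier Homeo" "x \<in> carrier Homeo" "y \<in> carrier Homeo"
  shows "comm (h \<circ> x \<circ> hinv h) (h \<circ> y \<circ> hinv h) = h \<circ> comm x y \<circ> hinv h"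
  using assms by (simp add: fun_eq_iff hinv_comp Homeo_comp_closed Homeo.inv_inv)

lemma comm_comp_left_commuting:
  assumes "f \<in> carrier Homeo" "g \<in> carrier Homeo" "e \<in> carrier Homeo" "e \<circ> g = g \<circ> e"
  shows "comm (f \<circ> e) g = comm f g"
proof -
  have "\<And>s. e (g s) = g (e s)" using assms(4) by (metis comp_apply)
  then show ?thesis using assms(1-3) by (simp add: fun_eq_iff hinv_comp)
qed

lemma comm_comp_right_commuting:
  assumes "f \<in> carrier Homeo" "g \<in> carrier Homeo" "e \<in> carrier Homeo" "e \<circ> f = f \<circ> e"
  shows "comm f (g \<circ> e) = comm f g"
proof -
  have "\<And>s. e (hinv f s) = hinv f (e s)"
    using assms(1) fun_cong[OF assms(4)] by (metis comp_apply hinv_eq_iff)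
  then show ?thesis using assms(1-3) by (simp add: fun_eq_iff hinv_comp)
qed

definition shift :: "real \<Rightarrow> real \<Rightarrow> real" where
  "shift c t = t + c"

lemma shift_in_Homeo: "shift c \<in> carrier Homeo"
proof -
  have "homeomorphism UNIV UNIV (shift c) (shift (-c))"
    unfolding homeomorphism_def shift_def by (auto intro!: continuous_intros simp: image_iff)
  then show ?thesis unfolding Homeo_carrier_iff by blast
qed

lemma hinv_shift: "hinv (shift c) = shift (-c)"
  by (rule Homeo.inv_equality) (auto simp: fun_eq_iff shift_def shift_in_Homeo)

lemma gen_a_eq_shift: "gen_a = shift 1"
  by (auto simp: fun_eq_iff gen_a_def shift_def)

definition gen_b_inv :: "real \<Rightarrow> real" where
  "gen_b_inv s = (if s \<le> 0 then s else if s \<le> 1 then s / (1 + s)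
                  else if s \<le> 2 then 1 / (3 - s) else s - 1)"

lemma gen_b_le_0: "t \<le> 0 \<Longrightarrow> gen_b t = t"
  by (simp add: gen_b_def)

lemma gen_b_gt_1: "1 < t \<Longrightarrow> gen_b t = t + 1"
  by (simp add: gen_b_def)

lemma gen_b_low: "0 < t \<Longrightarrow> t \<le> 1/2 \<Longrightarrow> gen_b t = t / (1 - t)"
  by (simp add: gen_b_def)

lemma gen_b_mid: "1/2 < t \<Longrightarrow> t \<le> 1 \<Longrightarrow> gen_b t = (3 * t - 1) / t"
  by (simp add: gen_b_def)

lemma gen_b_inv_gen_b: "gen_b_inv (gen_b t) = t"
  unfolding gen_b_def gen_b_inv_def by (auto simp: field_simps)

lemma gen_b_gen_b_inv: "gen_b (gen_b_inv s) = s"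
proof -
  consider "s \<le> 0" | "0 < s" "s \<le> 1" | "1 < s" "s \<le> 2" | "2 < s" by linarith
  then show ?thesis
  proof cases
    case 2
    then have "s / (1 + s) \<le> 1/2" "0 < s / (1 + s)" by (auto simp: field_simps)
    then have "gen_b (gen_b_inv s) = (s / (1 + s)) / (1 - s / (1 + s))"
      using 2 by (simp add: gen_b_inv_def gen_b_low)
    also have "\<dots> = s" using 2 by (simp add: field_simps)
    finally show ?thesis .
  next
    case 3
    then have "1/2 < 1 / (3 - s)" "1 / (3 - s) \<le> 1" by (auto simp: field_simps)
    then have "gen_b (gen_b_inv s) = (3 * (1 / (3 - s)) - 1) / (1 / (3 - s))"
      using 3 by (simp add: gen_b_inv_def gen_b_mid)
    also have "\<dots> = s" using 3 by (simp add: field_simps)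
    finally show ?thesis .
  qed (simp_all add: gen_b_def gen_b_inv_def)
qed

lemma homeomorphism_gen_b: "homeomorphism UNIV UNIV gen_b gen_b_inv"
proof -
  have "continuous_on UNIV gen_b"
    unfolding gen_b_def by (intro continuous_on_cases_1 continuous_intros) (auto simp: field_simps)
  moreover have "continuous_on UNIV gen_b_inv"
    unfolding gen_b_inv_def by (intro continuous_on_cases_1 continuous_intros) (auto simp: field_simps)
  ultimately show ?thesis
    unfolding homeomorphism_def using gen_b_gen_b_inv gen_b_inv_gen_b
    by (metis UNIV_I UNIV_eq_I image_eqI)
qed

lemma gen_b_in_Homeo: "gen_b \<in> carrier Homeo"
  using homeomorphism_gen_b Homeo_carrier_iff by blast

lemma hinv_gen_b: "hinv gen_b = gen_b_inv"
proof (rule Homeo.inv_equality)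
  show "gen_b_inv \<otimes>\<^bsub>Homeo\<^esub> gen_b = \<one>\<^bsub>Homeo\<^esub>" by (simp add: fun_eq_iff gen_b_inv_gen_b)
  show "gen_b_inv \<in> carrier Homeo"
    using homeomorphism_symD[OF homeomorphism_gen_b] Homeo_carrier_iff by blast
qed (rule gen_b_in_Homeo)

lemma subgroup_ThompsonF: "subgroup ThompsonF Homeo"
  unfolding ThompsonF_def
  by (rule Homeo.generate_is_subgroup) (simp add: gen_a_eq_shift shift_in_Homeo gen_b_in_Homeo)

lemmas ThompsonF_comp = subgroup.m_closed[OF subgroup_ThompsonF, unfolded Homeo_mult]
lemmas ThompsonF_hinv = subgroup.m_inv_closed[OF subgroup_ThompsonF]

lemma gen_a_in_F: "gen_a \<in> ThompsonF"
  unfolding ThompsonF_def by (rule generate.incl) simp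

lemma gen_b_in_F: "gen_b \<in> ThompsonF"
  unfolding ThompsonF_def by (rule generate.incl) simp

lemma funpow_gen_b_inv_in_F: "gen_b_inv ^^ n \<in> ThompsonF"
proof (induction n)
  case 0
  show ?case using subgroup.one_closed[OF subgroup_ThompsonF] by (simp add: id_def)
next
  case (Suc n)
  then show ?case
    using ThompsonF_comp ThompsonF_hinv[OF gen_b_in_F] by (metis funpow.simps(2) hinv_gen_b)
qed

lemma shift_of_nat_in_F: "shift (real n) \<in> ThompsonF"
proof (induction n)
  case 0
  have "shift 0 = id" by (auto simp: fun_eq_iff shift_def)
  then show ?case using subgroup.one_closed[OF subgroup_ThompsonF] by (simp add: id_def)
next
  case (Suc n)
  have "shift (real (Suc n)) = gen_a \<circ> shift (real n)"
    by (auto simp: fun_eq_iff shift_def gen_a_def)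
  then show ?case using ThompsonF_comp[OF gen_a_in_F Suc] by metis
qed

lemma shift_of_int_in_F: "shift (of_int m) \<in> ThompsonF"
proof (cases "0 \<le> m")
  case True
  then show ?thesis using shift_of_nat_in_F[of "nat m"] by simp
next
  case False
  then have "shift (of_int m) = hinv (shift (real (nat (- m))))" by (simp add: hinv_shift)
  then show ?thesis using ThompsonF_hinv[OF shift_of_nat_in_F] by simp
qed

lemma subgroup_ThompsonF': "subgroup ThompsonF' Homeo"
  unfolding ThompsonF'_def
  using Homeo.derived_is_subgroup subgroup_ThompsonF subgroup.subset by blast

section \<open>Local agreement with a subgroup\<close>

definition locally_in :: "(real \<Rightarrow> real) set \<Rightarrow> (real \<Rightarrow> real) \<Rightarrow> bool" where
  "locally_in H f \<longleftrightarrow> (\<forall>p q. \<exists>h\<in>H. \<forall>t\<in>{p..q}. h t = f t)"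

lemma locally_in_if_approximated:
  assumes "\<And>p q. \<exists>g. locally_in H g \<and> (\<forall>t\<in>{p..q}. g t = f t)"
  shows "locally_in H f"
  unfolding locally_in_def by (metis assms locally_in_def)

lemma locally_in_comp:
  assumes H: "subgroup H Homeo" and g: "g \<in> carrier Homeo"
    and "locally_in H f" "locally_in H g"
  shows "locally_in H (f \<circ> g)"
  unfolding locally_in_def
proof (intro allI)
  fix p q :: real
  obtain B where B: "g ` {p..q} \<subseteq> {-B..B}" using bounded_image_interval[OF g] .
  obtain hg where hg: "hg \<in> H" "\<forall>t\<in>{p..q}. hg t = g t" using assms(4) locally_in_def by blast
  obtain hf where hf: "hf \<in> H" "\<forall>t\<in>{-B..B}. hf t = f t" using assms(3) locally_in_def by blast
  have "hf \<circ> hg \<in> H" using subgroup.m_closed[OF H hf(1) hg(1)] by simp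
  moreover have "\<forall>t\<in>{p..q}. (hf \<circ> hg) t = (f \<circ> g) t" using B hf(2) hg(2) by auto
  ultimately show "\<exists>h\<in>H. \<forall>t\<in>{p..q}. h t = (f \<circ> g) t" by blast
qed

lemma locally_in_hinv:
  assumes H: "subgroup H Homeo" and f: "f \<in> carrier Homeo" and "locally_in H f"
  shows "locally_in H (hinv f)"
  unfolding locally_in_def
proof (intro allI)
  fix p q :: real
  obtain B where B: "hinv f ` {p..q} \<subseteq> {-B..B}"
    using bounded_image_interval[OF Homeo.inv_closed[OF f]] .
  obtain h where h: "h \<in> H" "\<forall>t\<in>{-B..B}. h t = f t" using assms(3) locally_in_def by blast
  have hc: "h \<in> carrier Homeo" using subgroup.mem_carrier[OF H h(1)] .
  have "\<forall>t\<in>{p..q}. hinv h t = hinv f t"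
  proof
    fix t assume "t \<in> {p..q}"
    then have "hinv f t \<in> {-B..B}" using B by blast
    then have "h (hinv f t) = t" using h(2) f by simp
    then show "hinv h t = hinv f t" using hinv_eq_iff[OF hc] by blast
  qed
  then show "\<exists>h'\<in>H. \<forall>t\<in>{p..q}. h' t = hinv f t" using subgroup.m_inv_closed[OF H h(1)] by blast
qed

lemma locally_in_generate:
  assumes H: "subgroup H Homeo" and S: "S \<subseteq> carrier Homeo" and "\<forall>s\<in>S. locally_in H s"
    and "f \<in> generate Homeo S"
  shows "locally_in H f"
  using assms(4)
proof (induction rule: generate.induct)
  case one
  show ?case unfolding locally_in_def using subgroup.one_closed[OF H] by (metis Homeo_one id_apply)
next
  case (incl h)
  then show ?case using assms(3) by blast
next
  case (inv h)
  then show ?case using locally_in_hinv[OF H] S assms(3) by blast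
next
  case (eng h1 h2)
  then show ?case
    using locally_in_comp[OF H Homeo.generate_in_carrier[OF S eng(2)]] by (simp only: Homeo_mult)
qed

text \<open>[x, y] = x \<circ> (y x^{-1} y^{-1}), and the second factor is the identity on [p, q] once
  y^{-1} is a translation moving [p, q] into the half-line fixed by x.\<close>
lemma F_fixing_left_ray_locally_in_F':
  assumes x: "x \<in> ThompsonF" and fix_ray: "\<forall>t\<le>c. x t = t"
  shows "locally_in ThompsonF' x"
  unfolding locally_in_def
proof (intro allI)
  fix p q :: real
  define m where "m = \<lfloor>c - q\<rfloor>"
  define y where "y = shift (- of_int m)"
  have xc: "x \<in> carrier Homeo" using subgroup.mem_carrier[OF subgroup_ThompsonF x] .
  have "y \<in> ThompsonF" unfolding y_def using shift_of_int_in_F[of "- m"] by simp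
  then have "comm x y \<in> ThompsonF'"
    unfolding ThompsonF'_def using comm_in_derived x by blast
  moreover have "\<forall>t\<in>{p..q}. comm x y t = x t"
  proof
    fix t assume "t \<in> {p..q}"
    moreover have "of_int m \<le> c - q" unfolding m_def by (rule of_int_floor_le)
    ultimately have "t + of_int m \<le> c" by simp
    then have "hinv x (t + of_int m) = t + of_int m" using fix_ray hinv_eq_iff[OF xc] by blast
    then show "comm x y t = x t" by (simp add: y_def hinv_shift shift_def)
  qed
  ultimately show "\<exists>h\<in>ThompsonF'. \<forall>t\<in>{p..q}. h t = x t" by blast
qed

text \<open>On [p, q], a agrees with a conjugate of b by a translation, which fixes a left half-line.\<close>
lemma gen_a_locally_in_F': "locally_in ThompsonF' gen_a"
proof (rule locally_in_if_approximated)
  fix p q :: real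
  define M where "M = \<lfloor>p\<rfloor> - 2"
  have M: "of_int M \<le> p - 2" by (simp add: M_def)
  define g where "g = shift (of_int M) \<circ> gen_b \<circ> shift (- of_int M)"
  have "g \<in> ThompsonF"
    unfolding g_def using ThompsonF_comp shift_of_int_in_F[of M] shift_of_int_in_F[of "- M"] gen_b_in_F
    by simp
  moreover have "\<forall>t\<le>(of_int M). g t = t" by (simp add: g_def shift_def gen_b_le_0)
  ultimately have "locally_in ThompsonF' g" by (rule F_fixing_left_ray_locally_in_F')
  moreover have "\<forall>t\<in>{p..q}. g t = gen_a t"
  proof
    fix t assume "t \<in> {p..q}"
    then have "1 < t - of_int M" using M by simp
    then show "g t = gen_a t" by (simp add: g_def shift_def gen_a_def gen_b_gt_1)
  qed
  ultimately show "\<exists>g. locally_in ThompsonF' g \<and> (\<forall>t\<in>{p..q}. g t = gen_a t)" by blast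
qed

lemma ThompsonF_locally_in_F': "f \<in> ThompsonF \<Longrightarrow> locally_in ThompsonF' f"
  unfolding ThompsonF_def
proof (rule locally_in_generate[OF subgroup_ThompsonF'])
  show "{gen_a, gen_b} \<subseteq> carrier Homeo" by (simp add: gen_a_eq_shift shift_in_Homeo gen_b_in_Homeo)
  show "\<forall>s\<in>{gen_a, gen_b}. locally_in ThompsonF' s"
    using gen_a_locally_in_F' F_fixing_left_ray_locally_in_F'[OF gen_b_in_F] gen_b_le_0 by blast
qed

section \<open>Squeezing compact intervals\<close>

lemma gen_b_rational_step:
  fixes r q :: int
  assumes "0 < r" "r < q"
  shows "\<exists>p' q'. 0 < q' \<and> q' < q \<and> gen_b (of_int r / of_int q) = of_int p' / of_int q'"
proof (cases "2 * r \<le> q")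
  case True
  then have "gen_b (of_int r / of_int q) = of_int r / of_int (q - r)"
    using assms by (simp add: gen_b_low field_simps)
  then show ?thesis using assms by (intro exI[of _ r] exI[of _ "q - r"]) auto
next
  case False
  then have "gen_b (of_int r / of_int q) = of_int (3 * r - q) / of_int r"
    using assms by (simp add: gen_b_mid field_simps)
  then show ?thesis using assms by blast
qed

text \<open>Descent on the denominator: p/q = k + r/q, and b sends r/q to a smaller denominator.\<close>
lemma rational_in_orbit_0: "0 < (q::int) \<Longrightarrow> \<exists>g\<in>ThompsonF. g 0 = of_int p / of_int q"
proof (induction "nat q" arbitrary: p q rule: less_induct)
  case less
  define k where "k = p div q"
  define r where "r = p mod q"
  have r: "0 \<le> r" "r < q" unfolding r_def using less.prems by auto
  have pq: "(of_int p / of_int q :: real) = of_int k + of_int r / of_int q"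
    using less.prems by (simp add: k_def r_def field_simps flip: of_int_mult of_int_add)
  show ?case
  proof (cases "r = 0")
    case True
    then have "shift (of_int k) 0 = of_int p / of_int q" using pq by (simp add: shift_def)
    then show ?thesis using shift_of_int_in_F by blast
  next
    case False
    obtain p' q' where q': "0 < q'" "q' < q" and b: "gen_b (of_int r / of_int q) = of_int p' / of_int q'"
      using gen_b_rational_step[of r q] False r by auto
    obtain g' where g': "g' \<in> ThompsonF" "g' 0 = of_int p' / of_int q'"
      using less.hyps[of q' p'] q' by auto
    define g where "g = shift (of_int k) \<circ> gen_b_inv \<circ> g'"
    have "g \<in> ThompsonF"
      unfolding g_def using ThompsonF_comp shift_of_int_in_F ThompsonF_hinv[OF gen_b_in_F] g'(1)
      by (simp add: hinv_gen_b)
    moreover have "g 0 = of_int p / of_int q"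
      unfolding g_def using g'(2) b[symmetric] pq by (simp add: shift_def gen_b_inv_gen_b)
    ultimately show ?thesis by blast
  qed
qed

lemma orbit_0_dense: "c < d \<Longrightarrow> \<exists>g\<in>ThompsonF. c < g 0 \<and> g 0 < d"
proof -
  assume "c < d"
  then obtain r where r: "r \<in> \<rat>" "c < r" "r < d" using Rats_dense_in_real by blast
  then obtain a b where "0 < b" "r = of_int a / of_int b" by (metis Rats_cases')
  then obtain g where "g \<in> ThompsonF" "g 0 = r" using rational_in_orbit_0 by blast
  then show ?thesis using r by blast
qed

lemma funpow_gen_b_inv_le_1:
  "0 \<le> t \<Longrightarrow> t \<le> real k + 1 \<Longrightarrow> 0 \<le> (gen_b_inv ^^ k) t \<and> (gen_b_inv ^^ k) t \<le> 1"
proof (induction k arbitrary: t)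
  case (Suc k)
  have nonneg: "0 \<le> gen_b_inv t" and "gen_b_inv t \<le> max 1 (t - 1)"
    using Suc.prems(1) by (auto simp: gen_b_inv_def field_simps)
  then have "gen_b_inv t \<le> real k + 1" using Suc.prems(2) by auto
  then show ?case using Suc.IH nonneg by (simp add: funpow_Suc_right del: funpow.simps)
qed simp

lemma funpow_gen_b_inv_unit_interval:
  "0 \<le> t \<Longrightarrow> t \<le> 1 \<Longrightarrow> (gen_b_inv ^^ n) t = t / (1 + real n * t)"
proof (induction n)
  case (Suc n)
  define s where "s = t / (1 + real n * t)"
  have nt: "0 \<le> real n * t" using Suc.prems by simp
  have "t \<le> 1 + real n * t" and pos: "0 < 1 + real n * t" "0 < 1 + real n * t + t"
    using nt Suc.prems by linarith+
  then have "0 \<le> s" "s \<le> 1" unfolding s_def using Suc.prems(1) by (simp_all add: divide_le_eq)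
  have "(gen_b_inv ^^ Suc n) t = gen_b_inv s" using Suc by (simp add: s_def)
  also have "\<dots> = s / (1 + s)" using \<open>0 \<le> s\<close> \<open>s \<le> 1\<close> by (auto simp: gen_b_inv_def)
  also have "\<dots> = t / (1 + real n * t + t)"
  proof -
    have "1 + s = (1 + real n * t + t) / (1 + real n * t)"
      unfolding s_def using pos by (simp add: field_simps)
    then show ?thesis unfolding s_def using pos by (simp add: divide_simps)
  qed
  also have "\<dots> = t / (1 + real (Suc n) * t)" by (simp add: algebra_simps)
  finally show ?case .
qed simp

lemma F_contracts_to_0:
  assumes "0 < \<delta>"
  shows "\<exists>f\<in>ThompsonF. \<forall>t\<in>{p..q}. 0 \<le> f t \<and> f t < \<delta>"
proof -
  obtain N :: nat where N: "1 / \<delta> < real N" using reals_Archimedean2 by blast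
  then have N_pos: "0 < real N" using assms by (smt (verit) divide_pos_pos)
  define m where "m = \<lceil>- p\<rceil>"
  define K where "K = nat \<lceil>q + of_int m\<rceil>"
  define f where "f = (gen_b_inv ^^ N) \<circ> (gen_b_inv ^^ K) \<circ> shift (of_int m)"
  have "f \<in> ThompsonF"
    unfolding f_def using ThompsonF_comp funpow_gen_b_inv_in_F shift_of_int_in_F by simp
  moreover have "0 \<le> f t \<and> f t < \<delta>" if t: "t \<in> {p..q}" for t
  proof -
    have "- p \<le> of_int m" "q + of_int m \<le> real K"
      unfolding m_def K_def by (simp, rule real_nat_ceiling_ge)
    then have "0 \<le> t + of_int m" "t + of_int m \<le> real K + 1" using t by auto
    define u where "u = (gen_b_inv ^^ K) (t + of_int m)"
    have u: "0 \<le> u" "u \<le> 1"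
      unfolding u_def using funpow_gen_b_inv_le_1 \<open>0 \<le> t + of_int m\<close> \<open>t + of_int m \<le> real K + 1\<close> by auto
    have "f t = u / (1 + real N * u)"
      using funpow_gen_b_inv_unit_interval[OF u] by (simp add: f_def u_def shift_def)
    moreover have "u / (1 + real N * u) < 1 / real N"
      using u N_pos by (simp add: add_pos_nonneg field_simps)
    moreover have "1 / real N < \<delta>" using N assms N_pos by (simp add: field_simps)
    ultimately show ?thesis using u N_pos by simp
  qed
  ultimately show ?thesis by blast
qed

lemma F'_squeeze:
  assumes "c < d"
  shows "\<exists>h\<in>ThompsonF'. \<forall>t\<in>{p..q}. c < h t \<and> h t < d"
proof -
  obtain g where g: "g \<in> ThompsonF" "c < g 0" "g 0 < d" using orbit_0_dense[OF assms] by blast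
  define e where "e = min (g 0 - c) (d - g 0)"
  have "0 < e" unfolding e_def using g by simp
  then obtain \<delta> where \<delta>: "0 < \<delta>" "\<forall>s. dist s 0 < \<delta> \<longrightarrow> dist (g s) (g 0) < e"
    using continuous_on_Homeo[OF subgroup.mem_carrier[OF subgroup_ThompsonF g(1)]]
    unfolding continuous_on_iff by blast
  obtain f where f: "f \<in> ThompsonF" "\<forall>t\<in>{p..q}. 0 \<le> f t \<and> f t < \<delta>"
    using F_contracts_to_0[OF \<delta>(1)] by blast
  obtain h where h: "h \<in> ThompsonF'" "\<forall>t\<in>{p..q}. h t = (g \<circ> f) t"
    using ThompsonF_locally_in_F'[OF ThompsonF_comp[OF g(1) f(1)]] locally_in_def by blast
  have "c < h t \<and> h t < d" if "t \<in> {p..q}" for t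
    using that f(2) \<delta>(2)[rule_format, of "f t"] h(2) by (auto simp: e_def dist_real_def)
  then show ?thesis using h(1) by blast
qed

definition supported_in :: "(real \<Rightarrow> real) \<Rightarrow> real set \<Rightarrow> bool" where
  "supported_in f S \<longleftrightarrow> (\<forall>t. t \<notin> S \<longrightarrow> f t = t)"

lemma supported_in_mono: "supported_in f S \<Longrightarrow> S \<subseteq> T \<Longrightarrow> supported_in f T"
  unfolding supported_in_def by blast

lemma supported_in_comp: "supported_in f S \<Longrightarrow> supported_in g S \<Longrightarrow> supported_in (f \<circ> g) S"
  unfolding supported_in_def by simp

lemma supported_in_hinv: "f \<in> carrier Homeo \<Longrightarrow> supported_in f S \<Longrightarrow> supported_in (hinv f) S"
  unfolding supported_in_def using hinv_eq_iff by blast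

lemma supported_in_maps_into:
  assumes f: "f \<in> carrier Homeo" and "supported_in f S" "t \<in> S"
  shows "f t \<in> S"
proof (rule ccontr)
  assume "f t \<notin> S"
  then have "f (f t) = f t" using assms(2) unfolding supported_in_def by blast
  then have "hinv f (f (f t)) = hinv f (f t)" by simp
  then have "f t = t" using f by simp
  then show False using \<open>f t \<notin> S\<close> \<open>t \<in> S\<close> by simp
qed

lemma supported_in_conj:
  assumes "f \<in> carrier Homeo" "supported_in g S"
  shows "supported_in (f \<circ> g \<circ> hinv f) (f ` S)"
  unfolding supported_in_def
proof (intro allI impI)
  fix t assume "t \<notin> f ` S"
  then have "hinv f t \<notin> S" using apply_hinv[OF assms(1)] by (metis image_eqI)
  then show "(f \<circ> g \<circ> hinv f) t = t" using assms unfolding supported_in_def by simp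
qed

lemma disjoint_supports_commute:
  assumes "f \<in> carrier Homeo" "g \<in> carrier Homeo" "supported_in f S" "supported_in g T"
    and "S \<inter> T = {}"
  shows "f \<circ> g = g \<circ> f"
proof
  fix t
  consider "t \<in> S" | "t \<in> T" | "t \<notin> S" "t \<notin> T" by blast
  then show "(f \<circ> g) t = (g \<circ> f) t"
  proof cases
    case 1
    then have "t \<notin> T" "f t \<notin> T" using assms(1,3,5) supported_in_maps_into by blast+
    then show ?thesis using assms(4) unfolding supported_in_def by simp
  next
    case 2
    then have "t \<notin> S" "g t \<notin> S" using assms(2,4,5) supported_in_maps_into by blast+
    then show ?thesis using assms(3) unfolding supported_in_def by simp
  qed (use assms in \<open>simp add: supported_in_def\<close>)
qed

lemma compactly_supported_imp_supported_in_interval: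
  assumes "compactly_supported f"
  obtains R where "0 \<le> R" "supported_in f {-R..R}"
proof -
  have "compact (closure {x. f x \<noteq> x})" using assms unfolding compactly_supported_def .
  then obtain B where B: "\<forall>x\<in>closure {x. f x \<noteq> x}. \<bar>x\<bar> \<le> B"
    using compact_imp_bounded bounded_real by meson
  have "f t = t" if "t \<notin> {-max B 0..max B 0}" for t
  proof (rule ccontr)
    assume "f t \<noteq> t"
    then have "t \<in> closure {x. f x \<noteq> x}" by (intro closure_subset[THEN subsetD]) simp
    then have "\<bar>t\<bar> \<le> B" using B by blast
    then have "t \<in> {-max B 0..max B 0}" by (simp add: abs_le_iff)
    then show False using that by blast
  qed
  then have "supported_in f {-max B 0..max B 0}" unfolding supported_in_def by blast
  then show thesis by (intro that[of "max B 0"]) simp_all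
qed

lemma displaced_interval:
  assumes f: "f \<in> carrier Homeo" and "f t0 \<noteq> t0"
  obtains r where "0 < r" "f ` {t0 - r<..<t0 + r} \<inter> {t0 - r<..<t0 + r} = {}"
proof -
  define e where "e = \<bar>f t0 - t0\<bar> / 3"
  have "0 < e" unfolding e_def using assms(2) by simp
  then obtain \<delta> where \<delta>: "0 < \<delta>" "\<forall>s. dist s t0 < \<delta> \<longrightarrow> dist (f s) (f t0) < e"
    using continuous_on_Homeo[OF f] unfolding continuous_on_iff by blast
  define r where "r = min \<delta> e"
  have r: "r \<le> \<delta>" "r \<le> e" unfolding r_def by simp_all
  have "f s \<notin> {t0 - r<..<t0 + r}" if "s \<in> {t0 - r<..<t0 + r}" for s
  proof -
    have "\<bar>s - t0\<bar> < r" using that by (simp add: abs_diff_less_iff)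
    then have "\<bar>f s - f t0\<bar> < e" using \<delta>(2) r(1) by (simp add: dist_real_def)
    moreover have "\<bar>f t0 - t0\<bar> \<le> \<bar>f t0 - f s\<bar> + \<bar>f s - t0\<bar>"
      using abs_triangle_ineq[of "f t0 - f s" "f s - t0"] by simp
    ultimately have "\<not> \<bar>f s - t0\<bar> < r"
      using r(2) abs_minus_commute[of "f t0" "f s"] abs_ge_zero[of "f t0 - t0"]
      unfolding e_def by linarith
    then show ?thesis by (simp add: abs_diff_less_iff)
  qed
  then have "f ` {t0 - r<..<t0 + r} \<inter> {t0 - r<..<t0 + r} = {}" by blast
  moreover have "0 < r" unfolding r_def using \<delta>(1) \<open>0 < e\<close> by simp
  ultimately show thesis using that by blast
qed

lemma normal_in_subgroupD:
  assumes D: "subgroup D Homeo" and N: "N \<lhd> Homeo\<lparr>carrier := D\<rparr>"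
  shows "subgroup N Homeo" "N \<subseteq> D" "\<And>x a. x \<in> D \<Longrightarrow> a \<in> N \<Longrightarrow> x \<circ> a \<circ> hinv x \<in> N"
proof -
  have sN: "subgroup N (Homeo\<lparr>carrier := D\<rparr>)"
    using N normal_imp_subgroup by blast
  then show "subgroup N Homeo" using Homeo.incl_subgroup[OF D] by blast
  show "N \<subseteq> D" using subgroup.subset[OF sN] by simp
  fix x a assume x: "x \<in> D" and a: "a \<in> N"
  have "x \<otimes>\<^bsub>Homeo\<lparr>carrier := D\<rparr>\<^esub> a \<otimes>\<^bsub>Homeo\<lparr>carrier := D\<rparr>\<^esub> inv\<^bsub>Homeo\<lparr>carrier := D\<rparr>\<^esub> x \<in> N"
    using group.normal_inv_iff[OF subgroup.subgroup_is_group[OF D group_Homeo]] N x a by auto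
  then show "x \<circ> a \<circ> hinv x \<in> N" using Homeo.m_inv_consistent[OF D x] by simp
qed

text \<open>Since n u^{-1} n^{-1} is supported in n(U), it commutes with v; therefore
  [u, v] = [[u, n], v].\<close>
lemma comm_in_normal_if_displaced:
  assumes D: "subgroup D Homeo" and N: "N \<lhd> Homeo\<lparr>carrier := D\<rparr>" and n: "n \<in> N"
    and disj: "n ` U \<inter> U = {}" and u: "u \<in> D" "supported_in u U" and v: "v \<in> D" "supported_in v U"
  shows "comm u v \<in> N"
proof -
  note sN = normal_in_subgroupD(1)[OF D N]
  have car: "n \<in> carrier Homeo" "u \<in> carrier Homeo" "v \<in> carrier Homeo"
    using normal_in_subgroupD(2)[OF D N] n u(1) v(1) subgroup.subset[OF D] by auto
  define c where "c = n \<circ> hinv u \<circ> hinv n"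
  have cc: "c \<in> carrier Homeo" unfolding c_def by (simp add: car Homeo_comp_closed)
  have "supported_in c (n ` U)"
    unfolding c_def using supported_in_conj[OF car(1) supported_in_hinv[OF car(2) u(2)]] .
  then have cv: "c \<circ> v = v \<circ> c" using disjoint_supports_commute[OF cc car(3) _ v(2) disj] by blast
  have "u \<circ> n \<circ> hinv u \<in> N" using normal_in_subgroupD(3)[OF D N u(1) n] .
  then have "comm u n \<in> N"
    using subgroup.m_closed[OF sN _ subgroup.m_inv_closed[OF sN n]] by (metis Homeo_mult)
  then have "u \<circ> c \<in> N" by (simp add: c_def comp_assoc)
  moreover have "v \<circ> hinv (u \<circ> c) \<circ> hinv v \<in> N"
    using normal_in_subgroupD(3)[OF D N v(1) subgroup.m_inv_closed[OF sN \<open>u \<circ> c \<in> N\<close>]] .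
  ultimately have "(u \<circ> c) \<circ> (v \<circ> hinv (u \<circ> c) \<circ> hinv v) \<in> N"
    using subgroup.m_closed[OF sN] by (metis Homeo_mult)
  then show ?thesis using comm_comp_left_commuting[OF car(2,3) cc cv] by (simp add: comp_assoc)
qed

section \<open>Groups of compactly supported homeomorphisms containing F'\<close>

locale compactly_supported_over_F' =
  fixes \<Gamma> :: "(real \<Rightarrow> real) set"
  assumes subgroup_\<Gamma>: "subgroup \<Gamma> Homeo"
    and compactly_supported_\<Gamma>: "\<forall>f\<in>\<Gamma>. compactly_supported f"
    and F'_subset_\<Gamma>: "ThompsonF' \<subseteq> \<Gamma>"
begin

abbreviation \<Gamma>' :: "(real \<Rightarrow> real) set" where
  "\<Gamma>' \<equiv> derived Homeo \<Gamma>"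

lemma subgroup_\<Gamma>': "subgroup \<Gamma>' Homeo"
  using Homeo.derived_is_subgroup subgroup.subset[OF subgroup_\<Gamma>] by blast

lemma \<Gamma>_carrier: "f \<in> \<Gamma> \<Longrightarrow> f \<in> carrier Homeo"
  using subgroup.mem_carrier[OF subgroup_\<Gamma>] .

lemma \<Gamma>_supported_in_interval:
  assumes "f \<in> \<Gamma>"
  obtains R where "0 \<le> R" "supported_in f {-R..R}"
  using compactly_supported_imp_supported_in_interval compactly_supported_\<Gamma> assms by blast

text \<open>Multiplying x by a conjugate of x^{-1} supported far away yields a commutator.\<close>
lemma comp_far_copy_in_\<Gamma>':
  assumes x: "x \<in> \<Gamma>" "supported_in x {-R..R}" and "a < b"
  obtains e where "x \<circ> e \<in> \<Gamma>'" "e \<in> carrier Homeo" "supported_in e {a<..<b}"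
proof -
  obtain g where g: "g \<in> ThompsonF'" "\<forall>t\<in>{-R..R}. a < g t \<and> g t < b"
    using F'_squeeze[OF \<open>a < b\<close>] by blast
  have g\<Gamma>: "g \<in> \<Gamma>" using g(1) F'_subset_\<Gamma> by blast
  note car = \<Gamma>_carrier[OF g\<Gamma>] \<Gamma>_carrier[OF x(1)]
  define e where "e = g \<circ> hinv x \<circ> hinv g"
  have "supported_in e (g ` {-R..R})"
    unfolding e_def using supported_in_conj[OF car(1) supported_in_hinv[OF car(2) x(2)]] .
  moreover have "g ` {-R..R} \<subseteq> {a<..<b}" using g(2) by auto
  ultimately have "supported_in e {a<..<b}" by (rule supported_in_mono)
  moreover have "x \<circ> e \<in> \<Gamma>'" using comm_in_derived[OF x(1) g\<Gamma>] by (simp add: e_def comp_assoc)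
  moreover have "e \<in> carrier Homeo" unfolding e_def using car by (simp add: Homeo_comp_closed)
  ultimately show thesis using that by blast
qed

lemma \<Gamma>_locally_in_\<Gamma>':
  assumes x: "x \<in> \<Gamma>"
  shows "locally_in \<Gamma>' x"
  unfolding locally_in_def
proof (intro allI)
  fix p q :: real
  obtain R where R: "supported_in x {-R..R}" using \<Gamma>_supported_in_interval x by blast
  obtain e where e: "x \<circ> e \<in> \<Gamma>'" "supported_in e {q<..<q + 1}"
    using comp_far_copy_in_\<Gamma>'[OF x R, of q "q + 1"] by auto
  have "\<forall>t\<in>{p..q}. (x \<circ> e) t = x t"
    using e(2) unfolding supported_in_def by auto
  then show "\<exists>h\<in>\<Gamma>'. \<forall>t\<in>{p..q}. h t = x t" using e(1) by blast
qed

lemma \<Gamma>'_squeeze: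
  assumes "c < d"
  shows "\<exists>h\<in>\<Gamma>'. \<forall>t\<in>{p..q}. c < h t \<and> h t < d"
proof -
  obtain g where g: "g \<in> ThompsonF'" "\<forall>t\<in>{p..q}. c < g t \<and> g t < d"
    using F'_squeeze[OF assms] by blast
  then obtain h where h: "h \<in> \<Gamma>'" "\<forall>t\<in>{p..q}. h t = g t"
    using \<Gamma>_locally_in_\<Gamma>' F'_subset_\<Gamma> locally_in_def by blast
  then have "\<forall>t\<in>{p..q}. c < h t \<and> h t < d" using g(2) by simp
  then show ?thesis using h(1) by blast
qed

text \<open>Correct x and y by conjugates of their inverses supported in two disjoint intervals to
  the right of their supports; the corrections commute with everything else involved.\<close>
lemma comm_eq_comm_in_\<Gamma>':
  assumes x: "x \<in> \<Gamma>" and y: "y \<in> \<Gamma>"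
  obtains x' y' a b where "x' \<in> \<Gamma>'" "y' \<in> \<Gamma>'" "supported_in x' {a..b}" "supported_in y' {a..b}"
    "comm x' y' = comm x y"
proof -
  obtain Rx Ry where Rx: "0 \<le> Rx" "supported_in x {-Rx..Rx}" and Ry: "supported_in y {-Ry..Ry}"
    using \<Gamma>_supported_in_interval x y by metis
  define R where "R = max Rx Ry"
  have supp: "supported_in x {-R..R}" "supported_in y {-R..R}"
    using Rx(2) Ry supported_in_mono unfolding R_def by fastforce+
  obtain e1 where e1: "x \<circ> e1 \<in> \<Gamma>'" "e1 \<in> carrier Homeo" "supported_in e1 {R + 1<..<R + 2}"
    using comp_far_copy_in_\<Gamma>'[OF x supp(1), of "R + 1" "R + 2"] by auto
  obtain e2 where e2: "y \<circ> e2 \<in> \<Gamma>'" "e2 \<in> carrier Homeo" "supported_in e2 {R + 3<..<R + 4}"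
    using comp_far_copy_in_\<Gamma>'[OF y supp(2), of "R + 3" "R + 4"] by auto
  have xc: "x \<in> carrier Homeo" and yc: "y \<in> carrier Homeo" using x y \<Gamma>_carrier by auto
  have ye2: "y \<circ> e2 \<in> carrier Homeo" using Homeo_comp_closed[OF yc e2(2)] .
  have "supported_in (y \<circ> e2) ({-R..R} \<union> {R + 3<..<R + 4})"
    using supported_in_comp[OF supported_in_mono[OF supp(2) Un_upper1]
        supported_in_mono[OF e2(3) Un_upper2]] .
  then have "e1 \<circ> (y \<circ> e2) = (y \<circ> e2) \<circ> e1"
    by (rule disjoint_supports_commute[OF e1(2) ye2 e1(3)]) auto
  moreover have "e2 \<circ> x = x \<circ> e2"
    by (rule disjoint_supports_commute[OF e2(2) xc e2(3) supp(1)]) auto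
  ultimately have comm_eq: "comm (x \<circ> e1) (y \<circ> e2) = comm x y"
    using comm_comp_left_commuting[OF xc ye2 e1(2)] comm_comp_right_commuting[OF xc yc e2(2)]
    by simp
  have "0 \<le> R" unfolding R_def using Rx(1) by simp
  then have sub: "{-R..R} \<subseteq> {-R..R + 4}" "{R + 1<..<R + 2} \<subseteq> {-R..R + 4}"
    "{R + 3<..<R + 4} \<subseteq> {-R..R + 4}"
    by auto
  have "supported_in (x \<circ> e1) {-R..R + 4}"
    using supported_in_comp[OF supported_in_mono[OF supp(1) sub(1)] supported_in_mono[OF e1(3) sub(2)]] .
  moreover have "supported_in (y \<circ> e2) {-R..R + 4}"
    using supported_in_comp[OF supported_in_mono[OF supp(2) sub(1)] supported_in_mono[OF e2(3) sub(3)]] .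
  ultimately show thesis using that e1(1) e2(1) comm_eq by blast
qed

lemma comm_in_normal:
  assumes N: "N \<lhd> Homeo\<lparr>carrier := \<Gamma>'\<rparr>" and n: "n \<in> N" "n \<noteq> id"
    and x: "x \<in> \<Gamma>" and y: "y \<in> \<Gamma>"
  shows "comm x y \<in> N"
proof -
  note ND = normal_in_subgroupD[OF subgroup_\<Gamma>' N]
  have nc: "n \<in> carrier Homeo" using ND(2) n(1) subgroup.mem_carrier[OF subgroup_\<Gamma>'] by blast
  obtain t0 where "n t0 \<noteq> t0" using n(2) by (auto simp: fun_eq_iff)
  then obtain r where r: "0 < r" and disj: "n ` {t0 - r<..<t0 + r} \<inter> {t0 - r<..<t0 + r} = {}"
    using displaced_interval[OF nc] by blast
  obtain x' y' a b where x'y': "x' \<in> \<Gamma>'" "y' \<in> \<Gamma>'" "supported_in x' {a..b}" "supported_in y' {a..b}"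
    and eq: "comm x' y' = comm x y"
    using comm_eq_comm_in_\<Gamma>'[OF x y] .
  obtain h where h: "h \<in> \<Gamma>'" "\<forall>t\<in>{a..b}. t0 - r < h t \<and> h t < t0 + r"
    using \<Gamma>'_squeeze[of "t0 - r" "t0 + r" a b] r by auto
  have car: "h \<in> carrier Homeo" "x' \<in> carrier Homeo" "y' \<in> carrier Homeo"
    using h(1) x'y'(1,2) subgroup.mem_carrier[OF subgroup_\<Gamma>'] by auto
  have hab: "h ` {a..b} \<subseteq> {t0 - r<..<t0 + r}" using h(2) by auto
  have "comm (h \<circ> x' \<circ> hinv h) (h \<circ> y' \<circ> hinv h) \<in> N"
  proof (rule comm_in_normal_if_displaced[OF subgroup_\<Gamma>' N n(1) disj])
    show "h \<circ> x' \<circ> hinv h \<in> \<Gamma>'" "h \<circ> y' \<circ> hinv h \<in> \<Gamma>'"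
      using subgroup_conj_closed[OF subgroup_\<Gamma>' h(1)] x'y'(1,2) by auto
    show "supported_in (h \<circ> x' \<circ> hinv h) {t0 - r<..<t0 + r}"
      "supported_in (h \<circ> y' \<circ> hinv h) {t0 - r<..<t0 + r}"
      using supported_in_mono[OF supported_in_conj[OF car(1) x'y'(3)] hab]
        supported_in_mono[OF supported_in_conj[OF car(1) x'y'(4)] hab] .
  qed
  then have "h \<circ> comm x y \<circ> hinv h \<in> N" using conj_comm[OF car] eq by simp
  then have "hinv h \<circ> (h \<circ> comm x y \<circ> hinv h) \<circ> hinv (hinv h) \<in> N"
    using ND(3) subgroup.m_inv_closed[OF subgroup_\<Gamma>' h(1)] by blast
  moreover have "hinv h \<circ> (h \<circ> comm x y \<circ> hinv h) \<circ> hinv (hinv h) = comm x y"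
    using car(1) by (simp add: Homeo.inv_inv fun_eq_iff)
  ultimately show ?thesis by simp
qed

lemma \<Gamma>'_subset_normal:
  assumes N: "N \<lhd> Homeo\<lparr>carrier := \<Gamma>'\<rparr>" and n: "n \<in> N" "n \<noteq> id"
  shows "\<Gamma>' \<subseteq> N"
proof -
  have "derived_set Homeo \<Gamma> \<subseteq> N" using comm_in_normal[OF assms] by auto
  then show ?thesis
    unfolding derived_def
    by (rule Homeo.generate_subgroup_incl[OF _ normal_in_subgroupD(1)[OF subgroup_\<Gamma>' N]])
qed

lemma \<Gamma>'_nontrivial: "\<exists>h\<in>\<Gamma>'. h \<noteq> id"
proof -
  obtain h where h: "h \<in> \<Gamma>'" "\<forall>t\<in>{0..0}. 1 < h t \<and> h t < 2"
    using \<Gamma>'_squeeze[of 1 2 0 0] by auto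
  then have "h 0 \<noteq> id 0" by simp
  then show ?thesis using h(1) by metis
qed

theorem simple_\<Gamma>': "simple (Homeo\<lparr>carrier := \<Gamma>'\<rparr>)"
  unfolding simple_def
proof (intro conjI allI impI)
  show "group (Homeo\<lparr>carrier := \<Gamma>'\<rparr>)"
    by (rule subgroup.subgroup_is_group[OF subgroup_\<Gamma>' group_Homeo])
  show "carrier (Homeo\<lparr>carrier := \<Gamma>'\<rparr>) \<noteq> {\<one>\<^bsub>Homeo\<lparr>carrier := \<Gamma>'\<rparr>\<^esub>}"
    using \<Gamma>'_nontrivial by auto
  fix N assume N: "N \<lhd> Homeo\<lparr>carrier := \<Gamma>'\<rparr>"
  show "N = {\<one>\<^bsub>Homeo\<lparr>carrier := \<Gamma>'\<rparr>\<^esub>} \<or> N = carrier (Homeo\<lparr>carrier := \<Gamma>'\<rparr>)"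
  proof (cases "\<exists>n\<in>N. n \<noteq> id")
    case True
    then show ?thesis using \<Gamma>'_subset_normal[OF N] normal_in_subgroupD(2)[OF subgroup_\<Gamma>' N] by auto
  next
    case False
    then show ?thesis using subgroup.one_closed[OF normal_in_subgroupD(1)[OF subgroup_\<Gamma>' N]] by auto
  qed
qed

end

theorem mainTheorem8:
  fixes \<Gamma> :: "(real \<Rightarrow> real) set"
  assumes "subgroup \<Gamma> Homeo"
    and "\<forall>f\<in>\<Gamma>. compactly_supported f"
    and "ThompsonF' \<subseteq> \<Gamma>"
  shows "simple (Homeo\<lparr>carrier := derived Homeo \<Gamma>\<rparr>)"
  using compactly_supported_over_F'.simple_\<Gamma>'[OF compactly_supported_over_F'.intro[OF assms]] .

end
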